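(* Let $d\ge1$, $\lambda>0$, $\delta>0$, and let $f:\mathbb{R}^d\to\mathbb{R}$ be continuous and bounded below. Then for any compact set $K\subset\mathbb{R}^d$ and any $\varepsilon>0$ there exists $C_{K,\varepsilon}>0$ such that for every $x\in K$ and every $N\ge1$, \[\mathbb{E}\Big[\big\|\widehat{\operatorname{zprox}}^{\delta,N}_{\lambda,f}(x)-\operatorname{zprox}^\delta_{\lambda,f}(x)\big\|^2\mathbf 1_{\Omega_{x,\varepsilon}}\Big]\le\frac{C_{K,\varepsilon}}{N},\] where $\Omega_{x,\varepsilon}=\{\frac1N\sum_{i=1}^N\exp(-f(y_i)/\delta)\ge\varepsilon\}$ and $(y_i)_{i=1}^N$ are the i.i.d. samples from $\mathcal N(x,\lambda\delta I)$ generating $\widehat{\operatorname{zprox}}^{\delta,N}_{\lambda,f}(x)$.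
   Context: $\operatorname{zprox}^\delta_{\lambda,f}(x)=\dfrac{\mathbb{E}_{y\sim\mathcal N(x,\lambda\delta I)}[y\exp(-f(y)/\delta)]}{\mathbb{E}_{y\sim\mathcal N(x,\lambda\delta I)}[\exp(-f(y)/\delta)]}$. The sampled estimator is $\widehat{\operatorname{zprox}}^{\delta,N}_{\lambda,f}(x)=\dfrac{\sum_{i=1}^Ny_i\exp(-f(y_i)/\delta)}{\sum_{i=1}^N\exp(-f(y_i)/\delta)}$ with $y_1,\dots,y_N$ i.i.d. from $\mathcal N(x,\lambda\delta I)$. *)

theory Defs
  imports "HOL-Probability.Probability"
begin

definition gauss :: "'a::euclidean_space \<Rightarrow> real \<Rightarrow> 'a measure" where
  "gauss x s = density lborel
     (\<lambda>y. ennreal ((2 * pi * s) powr (- real DIM('a) / 2) * exp (- (norm (y - x))\<^sup>2 / (2 * s))))"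

definition zprox :: "real \<Rightarrow> real \<Rightarrow> ('a::euclidean_space \<Rightarrow> real) \<Rightarrow> 'a \<Rightarrow> 'a" where
  "zprox delta lam f x =
     (\<integral>y. exp (- f y / delta) *\<^sub>R y \<partial>gauss x (lam * delta)) /\<^sub>R
     (\<integral>y. exp (- f y / delta) \<partial>gauss x (lam * delta))"

definition zprox_hat :: "real \<Rightarrow> ('a::euclidean_space \<Rightarrow> real) \<Rightarrow> nat \<Rightarrow> (nat \<Rightarrow> 'a) \<Rightarrow> 'a" where
  "zprox_hat delta f N y =
     (\<Sum>i<N. exp (- f (y i) / delta) *\<^sub>R y i) /\<^sub>R (\<Sum>i<N. exp (- f (y i) / delta))"

definition samples :: "real \<Rightarrow> real \<Rightarrow> 'a::euclidean_space \<Rightarrow> nat \<Rightarrow> (nat \<Rightarrow> 'a) measure" where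
  "samples delta lam x N = PiM {..<N} (\<lambda>_. gauss x (lam * delta))"

definition Omega_ev :: "real \<Rightarrow> ('a::euclidean_space \<Rightarrow> real) \<Rightarrow> nat \<Rightarrow> real \<Rightarrow> (nat \<Rightarrow> 'a) set" where
  "Omega_ev delta f N eps = {y. (1 / real N) * (\<Sum>i<N. exp (- f (y i) / delta)) \<ge> eps}"

end

theory Submission
  imports Defs
begin

text \<open>
  Write \<open>w y = exp (- f y / delta)\<close> and \<open>z = zprox delta lam f x\<close>. On \<open>Omega_ev\<close> the
  denominator of the estimator is at least \<open>N * eps\<close>, and the error of the estimator is
  \<open>\<Sum>i<N. h (y i)\<close> divided by that denominator, where \<open>h y = w y *\<^sub>R (y - z)\<close>.
  Since \<open>z\<close> is the \<open>w\<close>-weighted Gaussian mean, \<open>h\<close> has mean zero, so the i.i.d. summands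
  are orthogonal in \<open>L\<^sup>2\<close> and the second moment of their sum is \<open>N\<close> times that of \<open>h\<close>;
  dividing by \<open>(N * eps)\<^sup>2\<close> gives the rate \<open>1 / N\<close>. The constant is uniform in \<open>x \<in> K\<close>:
  \<open>w\<close> is bounded above because \<open>f\<close> is bounded below, the second moment of a Gaussian about
  its centre does not depend on the centre, and the normaliser \<open>\<integral>w\<close> is bounded away from
  zero on \<open>K\<close> because \<open>w\<close> has a positive minimum on a neighbourhood of \<open>K\<close> to which every
  Gaussian centred in \<open>K\<close> gives mass bounded below.
\<close>

lemma norm_sq_eq_sum_Basis:
  fixes v :: "'a::euclidean_space"
  shows "(norm v)\<^sup>2 = (\<Sum>b\<in>Basis. (v \<bullet> b)\<^sup>2)"
  unfolding power2_norm_eq_inner by (subst euclidean_inner) (simp add: power2_eq_square)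

lemma le_one_plus_square: "(t::real) \<le> 1 + t\<^sup>2"
proof -
  have "t * 2 \<le> 1 + t * t"
    using zero_le_power2[of "t - 1"] by (simp add: power2_eq_square algebra_simps)
  then show ?thesis
    using zero_le_square[of t] unfolding power2_eq_square by linarith
qed

definition gauss_density :: "'a::euclidean_space \<Rightarrow> real \<Rightarrow> 'a \<Rightarrow> real" where
  "gauss_density x s y = (2 * pi * s) powr (- real DIM('a) / 2) * exp (- (norm (y - x))\<^sup>2 / (2 * s))"

lemma borel_measurable_gauss_density[measurable]: "gauss_density x s \<in> borel_measurable borel"
  unfolding gauss_density_def by measurable

lemma gauss_eq_density: "gauss x s = density lborel (\<lambda>y. ennreal (gauss_density x s y))"
  by (simp add: gauss_def gauss_density_def)

lemma sets_gauss[simp, measurable_cong]: "sets (gauss x s) = sets borel"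
  by (simp add: gauss_def)

lemma space_gauss[simp]: "space (gauss x s) = UNIV"
  by (simp add: gauss_def)

lemma nn_integral_gauss:
  "F \<in> borel_measurable borel \<Longrightarrow>
    (\<integral>\<^sup>+ y. F y \<partial>gauss x s) = (\<integral>\<^sup>+ y. ennreal (gauss_density x s y) * F y \<partial>lborel)"
  unfolding gauss_eq_density by (subst nn_integral_density) auto

lemma nn_integral_gaussian_kernel_real:
  fixes s :: real assumes "0 < s"
  shows "(\<integral>\<^sup>+ t. ennreal (exp (- t\<^sup>2 / (2 * s))) \<partial>lborel) = ennreal (sqrt (2 * pi * s))"
proof -
  have "ennreal (exp (- t\<^sup>2 / (2 * s))) =
      ennreal (sqrt (2 * pi * s)) * ennreal (normal_density 0 (sqrt s) t)" for t
    using assms by (simp add: normal_density_def ennreal_mult[symmetric] real_sqrt_mult)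
  moreover have "(\<integral>\<^sup>+ t. ennreal (normal_density 0 (sqrt s) t) \<partial>lborel) = 1"
    using assms by (subst nn_integral_eq_integral) (auto simp: normal_density_nonneg)
  ultimately show ?thesis
    by (simp add: nn_integral_cmult)
qed

lemma nn_integral_gaussian_kernel:
  fixes x :: "'a::euclidean_space" assumes s: "0 < s"
  shows "(\<integral>\<^sup>+ y. ennreal (exp (- (norm (y - x))\<^sup>2 / (2 * s))) \<partial>lborel)
    = ennreal ((2 * pi * s) powr (real DIM('a) / 2))"
proof -
  have product_form: "ennreal (exp (- (norm y)\<^sup>2 / (2 * s))) =
      (\<Prod>b\<in>Basis. ennreal (exp (- (y \<bullet> b)\<^sup>2 / (2 * s))))" for y :: 'a
    by (simp add: norm_sq_eq_sum_Basis sum_divide_distrib[symmetric] sum_negf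
        exp_sum[symmetric] prod_ennreal)
  have "(\<integral>\<^sup>+ y. ennreal (exp (- (norm (y - x))\<^sup>2 / (2 * s))) \<partial>lborel)
      = (\<integral>\<^sup>+ y. ennreal (exp (- (norm (y::'a))\<^sup>2 / (2 * s))) \<partial>lborel)"
    by (subst lborel_distr_plus[of x, symmetric], subst nn_integral_distr) auto
  also have "\<dots> = (\<Prod>b\<in>(Basis::'a set). \<integral>\<^sup>+ t. ennreal (exp (- t\<^sup>2 / (2 * s))) \<partial>lborel)"
    unfolding product_form by (rule nn_integral_lborel_prod) auto
  also have "\<dots> = ennreal (sqrt (2 * pi * s) ^ DIM('a))"
    unfolding nn_integral_gaussian_kernel_real[OF s] using s by (simp add: ennreal_power)
  also have "sqrt (2 * pi * s) ^ DIM('a) = (2 * pi * s) powr (real DIM('a) / 2)"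
    using s by (simp add: powr_half_sqrt[symmetric] powr_realpow[symmetric] powr_powr)
  finally show ?thesis .
qed

lemma prob_space_gauss:
  assumes "0 < s" shows "prob_space (gauss x s)"
proof
  have "emeasure (gauss x s) UNIV = (\<integral>\<^sup>+ y. ennreal (gauss_density x s y) \<partial>lborel)"
    unfolding gauss_eq_density by (subst emeasure_density) auto
  also have "\<dots> = ennreal ((2 * pi * s) powr (- real DIM('a) / 2)) *
      (\<integral>\<^sup>+ y. ennreal (exp (- (norm (y - x))\<^sup>2 / (2 * s))) \<partial>lborel)"
    unfolding gauss_density_def by (subst nn_integral_cmult[symmetric]) (auto simp: ennreal_mult)
  also have "\<dots> = 1"
    unfolding nn_integral_gaussian_kernel[OF assms]
    using assms by (simp add: ennreal_mult[symmetric] powr_add[symmetric])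
  finally show "emeasure (gauss x s) (space (gauss x s)) = 1" by simp
qed

text \<open>
  The factor \<open>r = \<parallel>y - x\<parallel>\<^sup>2\<close> is absorbed by doubling the variance, since
  \<open>r * exp (- r / (2 * s)) \<le> 4 * s * exp (- r / (4 * s))\<close> follows from \<open>u \<le> exp u\<close>.
\<close>

lemma gauss_density_sq_dist_le:
  fixes x :: "'a::euclidean_space" assumes s: "0 < s"
  shows "gauss_density x s y * (norm (y - x))\<^sup>2
    \<le> 4 * s * 2 powr (real DIM('a) / 2) * gauss_density x (2 * s) y"
proof -
  define r where "r = (norm (y - x))\<^sup>2"
  have "r / (4 * s) \<le> exp (r / (4 * s))"
    using exp_ge_add_one_self[of "r / (4 * s)"] by linarith
  then have "r \<le> 4 * s * exp (r / (4 * s))"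
    using s by (simp add: field_simps)
  then have "exp (- r / (2 * s)) * r \<le> exp (- r / (2 * s)) * (4 * s * exp (r / (4 * s)))"
    by (intro mult_left_mono) auto
  also have "\<dots> = 4 * s * exp (- r / (2 * (2 * s)))"
    using s by (simp add: mult.left_commute exp_add[symmetric] field_simps)
  finally have key: "exp (- r / (2 * s)) * r \<le> 4 * s * exp (- r / (2 * (2 * s)))" .
  have scale: "(2 * pi * s) powr (- real DIM('a) / 2)
      = 2 powr (real DIM('a) / 2) * (2 * pi * (2 * s)) powr (- real DIM('a) / 2)"
    using s by (simp add: powr_mult powr_minus field_simps flip: powr_add)
  show ?thesis
    unfolding gauss_density_def r_def[symmetric] scale
    using mult_left_mono[OF key, of "2 powr (real DIM('a) / 2) * (2 * pi * (2 * s)) powr (- real DIM('a) / 2)"]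
    by (simp add: algebra_simps)
qed

lemma gauss_second_moment:
  fixes x :: "'a::euclidean_space" assumes s: "0 < s"
  shows "integrable (gauss x s) (\<lambda>y. (norm (y - x))\<^sup>2)"
    and "(\<integral>y. (norm (y - x))\<^sup>2 \<partial>gauss x s) \<le> 4 * s * 2 powr (real DIM('a) / 2)"
proof -
  define V where "V = 4 * s * 2 powr (real DIM('a) / 2)"
  have "(\<integral>\<^sup>+ y. ennreal ((norm (y - x))\<^sup>2) \<partial>gauss x s)
      = (\<integral>\<^sup>+ y. ennreal (gauss_density x s y * (norm (y - x))\<^sup>2) \<partial>lborel)"
    using s by (subst nn_integral_gauss) (auto simp: ennreal_mult gauss_density_def)
  also have "\<dots> \<le> (\<integral>\<^sup>+ y. ennreal V * ennreal (gauss_density x (2 * s) y) \<partial>lborel)"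
    using s gauss_density_sq_dist_le[OF s]
    by (intro nn_integral_mono) (auto simp: V_def ennreal_mult[symmetric] gauss_density_def)
  also have "\<dots> = ennreal V * emeasure (gauss x (2 * s)) UNIV"
    unfolding gauss_eq_density by (subst emeasure_density) (auto simp: nn_integral_cmult)
  also have "\<dots> = ennreal V"
    using prob_space.emeasure_space_1[OF prob_space_gauss[of "2 * s" x]] s by simp
  finally have bound: "(\<integral>\<^sup>+ y. ennreal ((norm (y - x))\<^sup>2) \<partial>gauss x s) \<le> ennreal V" .
  then show int: "integrable (gauss x s) (\<lambda>y. (norm (y - x))\<^sup>2)"
    by (intro integrableI_nonneg) (auto intro: le_less_trans[OF _ ennreal_less_top])
  have "0 \<le> V" unfolding V_def using s by simp
  then show "(\<integral>y. (norm (y - x))\<^sup>2 \<partial>gauss x s) \<le> V"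
    using bound int by (subst (asm) nn_integral_eq_integral) auto
qed

lemma measure_gauss_cball_ge:
  fixes x :: "'a::euclidean_space" assumes s: "0 < s"
  shows "(2 * pi * s) powr (- real DIM('a) / 2) * exp (- 1 / (2 * s)) * unit_ball_vol (real DIM('a))
    \<le> measure (gauss x s) (cball x 1)"
proof -
  define c where "c = (2 * pi * s) powr (- real DIM('a) / 2) * exp (- 1 / (2 * s))"
  have c_le: "c \<le> gauss_density x s y" if "y \<in> cball x 1" for y
  proof -
    have "(norm (y - x))\<^sup>2 \<le> 1"
      using that by (simp add: dist_norm norm_minus_commute power_le_one)
    then show ?thesis
      unfolding c_def gauss_density_def using s by (auto intro!: mult_left_mono divide_right_mono)
  qed
  have "ennreal (c * unit_ball_vol (real DIM('a))) = (\<integral>\<^sup>+ y. ennreal c * indicator (cball x 1) y \<partial>lborel)"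
    using s by (simp add: c_def emeasure_cball ennreal_mult nn_integral_cmult_indicator)
  also have "\<dots> \<le> (\<integral>\<^sup>+ y. ennreal (gauss_density x s y) * indicator (cball x 1) y \<partial>lborel)"
    using c_le by (intro nn_integral_mono) (auto simp: indicator_def intro!: ennreal_leI)
  also have "\<dots> = emeasure (gauss x s) (cball x 1)"
    unfolding gauss_eq_density by (subst emeasure_density) auto
  finally show ?thesis
    using s by (simp add: c_def finite_measure.emeasure_eq_measure[OF prob_space.finite_measure[OF prob_space_gauss[OF s]]])
qed

lemma gauss_integral_uniformly_positive:
  fixes g :: "'a::euclidean_space \<Rightarrow> real"
  assumes s: "0 < s" and "compact K" and g_cont: "continuous_on UNIV g"
    and g_pos: "\<And>y. 0 < g y" and g_le: "\<And>y. g y \<le> B"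
  shows "\<exists>L>0. \<forall>x\<in>K. L \<le> (\<integral>y. g y \<partial>gauss x s)"
proof -
  obtain R where R: "\<And>x. x \<in> K \<Longrightarrow> norm x \<le> R" and "0 < R"
    using compact_imp_bounded[OF \<open>compact K\<close>] by (auto simp: bounded_pos)
  have "\<exists>y0\<in>cball 0 (R + 1). \<forall>y\<in>cball 0 (R + 1). g y0 \<le> g y"
    using \<open>0 < R\<close> by (intro continuous_attains_inf continuous_on_subset[OF g_cont]) auto
  then obtain y0 where y0: "\<And>y. y \<in> cball 0 (R + 1) \<Longrightarrow> g y0 \<le> g y"
    by blast
  define c where "c = (2 * pi * s) powr (- real DIM('a) / 2) * exp (- 1 / (2 * s)) * unit_ball_vol (real DIM('a))"
  have "\<forall>x\<in>K. g y0 * c \<le> (\<integral>y. g y \<partial>gauss x s)"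
  proof
    fix x assume "x \<in> K"
    interpret prob_space "gauss x s" using prob_space_gauss[OF s] .
    have local_min: "g y0 * indicator (cball x 1) y \<le> g y" for y
    proof (cases "y \<in> cball x 1")
      case True
      then have "norm y \<le> R + 1"
        using R[OF \<open>x \<in> K\<close>] norm_triangle_ineq2[of y x] by (auto simp: dist_norm norm_minus_commute)
      then show ?thesis using y0[of y] True by simp
    qed (simp add: less_imp_le g_pos)
    have "g y0 * c \<le> g y0 * measure (gauss x s) (cball x 1)"
      using measure_gauss_cball_ge[OF s, of x] g_pos by (simp add: c_def less_imp_le)
    also have "\<dots> = (\<integral>y. g y0 * indicator (cball x 1) y \<partial>gauss x s)"
      by simp
    also have "\<dots> \<le> (\<integral>y. g y \<partial>gauss x s)"
    proof (rule integral_mono[OF _ _ local_min])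
      have [measurable]: "g \<in> borel_measurable borel"
        using g_cont by (rule borel_measurable_continuous_onI)
      show "integrable (gauss x s) g"
        using g_pos g_le by (intro integrable_const_bound[where B=B]) (auto simp: abs_of_pos)
    qed (simp add: integrable_real_indicator emeasure_eq_measure)
    finally show "g y0 * c \<le> (\<integral>y. g y \<partial>gauss x s)" .
  qed
  moreover have "0 < g y0 * c"
    using g_pos s by (simp add: c_def)
  ultimately show ?thesis by blast
qed

context prob_space
begin

lemma integral_PiM_component:
  fixes F :: "'a \<Rightarrow> 'b::{banach, second_countable_topology}" and N :: nat
  assumes "integrable M F" and "i < N"
  shows "integrable (PiM {..<N} (\<lambda>_. M)) (\<lambda>\<omega>. F (\<omega> i))"
    and "(\<integral>\<omega>. F (\<omega> i) \<partial>PiM {..<N} (\<lambda>_. M)) = integral\<^sup>L M F"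
proof -
  have F_measurable: "F \<in> borel_measurable M" using assms(1) by auto
  have distr_eq: "distr (PiM {..<N} (\<lambda>_. M)) M (\<lambda>\<omega>. \<omega> i) = M"
    using \<open>i < N\<close> by (intro distr_PiM_component) (auto intro: prob_space_axioms)
  have component: "(\<lambda>\<omega>. \<omega> i) \<in> measurable (PiM {..<N} (\<lambda>_. M)) M"
    using \<open>i < N\<close> by (intro measurable_component_singleton) auto
  show "integrable (PiM {..<N} (\<lambda>_. M)) (\<lambda>\<omega>. F (\<omega> i))"
    using integrable_distr_eq[OF component F_measurable] distr_eq assms(1) by simp
  show "(\<integral>\<omega>. F (\<omega> i) \<partial>PiM {..<N} (\<lambda>_. M)) = integral\<^sup>L M F"
    using integral_distr[OF component F_measurable] distr_eq by simp
qed

lemma integral_PiM_two_components: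
  fixes g h :: "'a \<Rightarrow> real" and N :: nat
  assumes g: "integrable M g" and h: "integrable M h" and "i < N" "j < N" "i \<noteq> j"
  shows "integrable (PiM {..<N} (\<lambda>_. M)) (\<lambda>\<omega>. g (\<omega> i) * h (\<omega> j))"
    and "(\<integral>\<omega>. g (\<omega> i) * h (\<omega> j) \<partial>PiM {..<N} (\<lambda>_. M)) = integral\<^sup>L M g * integral\<^sup>L M h"
proof -
  interpret product_sigma_finite "\<lambda>_::nat. M"
    by (simp add: product_sigma_finite_def sigma_finite_measure)
  define F where "F k = (if k = i then g else if k = j then h else (\<lambda>_. 1))" for k
  have F: "integrable M (F k)" for k
    unfolding F_def using g h by auto
  have two_factors: "(\<Prod>k<N. (if k = i then a else if k = j then b else 1)) = a * b" for a b :: real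
    using assms(3-5) by (subst prod.If_cases) (auto simp: prod.delta)
  have "(\<Prod>k<N. F k (\<omega> k)) = g (\<omega> i) * h (\<omega> j)" for \<omega>
    unfolding two_factors[symmetric] by (intro prod.cong) (auto simp: F_def)
  moreover have "(\<Prod>k<N. integral\<^sup>L M (F k)) = integral\<^sup>L M g * integral\<^sup>L M h"
    unfolding two_factors[symmetric] by (intro prod.cong) (auto simp: F_def prob_space)
  ultimately show "integrable (PiM {..<N} (\<lambda>_. M)) (\<lambda>\<omega>. g (\<omega> i) * h (\<omega> j))"
    and "(\<integral>\<omega>. g (\<omega> i) * h (\<omega> j) \<partial>PiM {..<N} (\<lambda>_. M)) = integral\<^sup>L M g * integral\<^sup>L M h"
    using product_integrable_prod[of "{..<N}" F] product_integral_prod[of "{..<N}" F] F by simp_all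
qed

lemma integral_PiM_sum_sq:
  fixes g :: "'a \<Rightarrow> real" and N :: nat
  assumes g: "integrable M g" and g2: "integrable M (\<lambda>y. (g y)\<^sup>2)" and "integral\<^sup>L M g = 0"
  shows "integrable (PiM {..<N} (\<lambda>_. M)) (\<lambda>\<omega>. (\<Sum>i<N. g (\<omega> i))\<^sup>2)"
    and "(\<integral>\<omega>. (\<Sum>i<N. g (\<omega> i))\<^sup>2 \<partial>PiM {..<N} (\<lambda>_. M)) = real N * (\<integral>y. (g y)\<^sup>2 \<partial>M)"
proof -
  have expand: "(\<Sum>i<N. g (\<omega> i))\<^sup>2 = (\<Sum>i<N. \<Sum>j<N. g (\<omega> i) * g (\<omega> j))" for \<omega> :: "nat \<Rightarrow> 'a"
    by (simp add: power2_eq_square sum_product)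
  have products: "integrable (PiM {..<N} (\<lambda>_. M)) (\<lambda>\<omega>. g (\<omega> i) * g (\<omega> j))
      \<and> (\<integral>\<omega>. g (\<omega> i) * g (\<omega> j) \<partial>PiM {..<N} (\<lambda>_. M)) = (if i = j then \<integral>y. (g y)\<^sup>2 \<partial>M else 0)"
    if "i < N" "j < N" for i j
  proof (cases "i = j")
    case True
    then show ?thesis
      using integral_PiM_component[OF g2 \<open>i < N\<close>] by (simp add: power2_eq_square)
  next
    case False
    then show ?thesis
      using integral_PiM_two_components[OF g g that False] \<open>integral\<^sup>L M g = 0\<close> by simp
  qed
  show "integrable (PiM {..<N} (\<lambda>_. M)) (\<lambda>\<omega>. (\<Sum>i<N. g (\<omega> i))\<^sup>2)"
    unfolding expand using products by (intro Bochner_Integration.integrable_sum) auto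
  have "(\<integral>\<omega>. (\<Sum>i<N. \<Sum>j<N. g (\<omega> i) * g (\<omega> j)) \<partial>PiM {..<N} (\<lambda>_. M))
      = (\<Sum>i<N. \<Sum>j<N. \<integral>\<omega>. g (\<omega> i) * g (\<omega> j) \<partial>PiM {..<N} (\<lambda>_. M))"
    using products by (subst Bochner_Integration.integral_sum)
      (auto intro!: sum.cong Bochner_Integration.integral_sum Bochner_Integration.integrable_sum)
  also have "\<dots> = (\<Sum>i<N. \<Sum>j<N. if i = j then \<integral>y. (g y)\<^sup>2 \<partial>M else 0)"
    using products by (auto intro!: sum.cong)
  finally show "(\<integral>\<omega>. (\<Sum>i<N. g (\<omega> i))\<^sup>2 \<partial>PiM {..<N} (\<lambda>_. M)) = real N * (\<integral>y. (g y)\<^sup>2 \<partial>M)"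
    unfolding expand by simp
qed

lemma nn_integral_PiM_norm_sum_sq:
  fixes h :: "'a \<Rightarrow> 'b::euclidean_space" and N :: nat
  assumes h: "integrable M h" and h2: "integrable M (\<lambda>y. (norm (h y))\<^sup>2)" and "integral\<^sup>L M h = 0"
  shows "(\<integral>\<^sup>+ \<omega>. ennreal ((norm (\<Sum>i<N. h (\<omega> i)))\<^sup>2) \<partial>PiM {..<N} (\<lambda>_. M))
     = ennreal (real N * (\<integral>y. (norm (h y))\<^sup>2 \<partial>M))"
proof -
  have [measurable]: "h \<in> borel_measurable M" using h by auto
  have coord: "integrable M (\<lambda>y. h y \<bullet> b)" "integral\<^sup>L M (\<lambda>y. h y \<bullet> b) = 0" for b
    using h \<open>integral\<^sup>L M h = 0\<close> by auto
  have coord2: "integrable M (\<lambda>y. (h y \<bullet> b)\<^sup>2)" if "b \<in> Basis" for b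
  proof (rule Bochner_Integration.integrable_bound[OF h2])
    show "AE y in M. norm ((h y \<bullet> b)\<^sup>2) \<le> norm ((norm (h y))\<^sup>2)"
      using Basis_le_norm[OF that] by (auto intro!: power_mono simp flip: abs_le_square_iff)
  qed measurable
  note coord_sums = integral_PiM_sum_sq[OF coord(1) coord2 coord(2)]
  have expand: "(norm (\<Sum>i<N. h (\<omega> i)))\<^sup>2 = (\<Sum>b\<in>Basis. (\<Sum>i<N. h (\<omega> i) \<bullet> b)\<^sup>2)" for \<omega>
    by (simp add: norm_sq_eq_sum_Basis inner_sum_left)
  have int: "integrable (PiM {..<N} (\<lambda>_. M)) (\<lambda>\<omega>. (norm (\<Sum>i<N. h (\<omega> i)))\<^sup>2)"
    unfolding expand using coord_sums by (intro Bochner_Integration.integrable_sum) auto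
  have "(\<integral>\<omega>. (norm (\<Sum>i<N. h (\<omega> i)))\<^sup>2 \<partial>PiM {..<N} (\<lambda>_. M))
      = (\<Sum>b\<in>Basis. real N * (\<integral>y. (h y \<bullet> b)\<^sup>2 \<partial>M))"
    unfolding expand using coord_sums by simp
  also have "\<dots> = real N * (\<integral>y. (norm (h y))\<^sup>2 \<partial>M)"
    using coord2 by (simp add: norm_sq_eq_sum_Basis sum_distrib_left)
  finally show ?thesis
    using int by (subst nn_integral_eq_integral) auto
qed

end

lemma norm_self_normalized_sub_le:
  fixes y :: "nat \<Rightarrow> 'a::real_normed_vector" and w :: "'a \<Rightarrow> real"
  assumes "0 < eps" and "eps \<le> (1 / real N) * (\<Sum>i<N. w (y i))"
  shows "(norm ((\<Sum>i<N. w (y i) *\<^sub>R y i) /\<^sub>R (\<Sum>i<N. w (y i)) - c))\<^sup>2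
    \<le> (norm (\<Sum>i<N. w (y i) *\<^sub>R (y i - c)))\<^sup>2 / (real N * eps)\<^sup>2"
proof -
  define S where "S = (\<Sum>i<N. w (y i))"
  have "0 < N"
    using assms by (cases N) auto
  then have "real N * eps \<le> S"
    using assms(2) by (simp add: S_def field_simps)
  moreover have "0 < real N * eps"
    using \<open>0 < N\<close> \<open>0 < eps\<close> by simp
  ultimately have "0 < S" by linarith
  have "(\<Sum>i<N. w (y i) *\<^sub>R y i) /\<^sub>R S - c = (\<Sum>i<N. w (y i) *\<^sub>R (y i - c)) /\<^sub>R S"
    using \<open>0 < S\<close> by (simp add: S_def scaleR_diff_right sum_subtractf scaleR_sum_left[symmetric])
  then have "(norm ((\<Sum>i<N. w (y i) *\<^sub>R y i) /\<^sub>R S - c))\<^sup>2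
      = (norm (\<Sum>i<N. w (y i) *\<^sub>R (y i - c)))\<^sup>2 / S\<^sup>2"
    using \<open>0 < S\<close> by (simp add: power_mult_distrib power_inverse divide_inverse)
  also have "\<dots> \<le> (norm (\<Sum>i<N. w (y i) *\<^sub>R (y i - c)))\<^sup>2 / (real N * eps)\<^sup>2"
    using \<open>real N * eps \<le> S\<close> \<open>0 < S\<close> \<open>0 < N\<close> \<open>0 < eps\<close>
    by (intro divide_left_mono power_mono mult_pos_pos zero_less_power) auto
  finally show ?thesis
    unfolding S_def .
qed

text \<open>
  The point \<open>x\<close> is only a reference point for the second moment; in the application it is the
  centre of the Gaussian.
\<close>

locale self_normalized_sampling = prob_space M
  for M :: "'a::euclidean_space measure" and w :: "'a \<Rightarrow> real" and B :: real and x :: 'a +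
  assumes sets_M[measurable_cong]: "sets M = sets borel"
    and w_measurable[measurable]: "w \<in> borel_measurable borel"
    and w_pos: "\<And>y. 0 < w y" and w_le: "\<And>y. w y \<le> B"
    and integrable_sq_dist: "integrable M (\<lambda>y. (norm (y - x))\<^sup>2)"
begin

definition weighted_mean :: 'a where
  "weighted_mean = (\<integral>y. w y *\<^sub>R y \<partial>M) /\<^sub>R (\<integral>y. w y \<partial>M)"

lemma integrable_w: "integrable M w"
  using w_pos w_le by (intro integrable_const_bound[where B=B]) (auto simp: abs_of_pos)

lemma integral_w_pos: "0 < (\<integral>y. w y \<partial>M)"
proof -
  have nonneg: "AE y in M. 0 \<le> w y"
    using w_pos by (simp add: less_imp_le)
  have "(AE y in M. w y = 0) \<longleftrightarrow> (AE y in M. False)"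
    using w_pos by (intro AE_cong) (simp add: less_imp_neq[THEN not_sym])
  then have "(\<integral>y. w y \<partial>M) \<noteq> 0"
    using integral_nonneg_eq_0_iff_AE[OF integrable_w nonneg] AE_False by simp
  then show ?thesis
    using integral_nonneg_AE[OF nonneg] by simp
qed

lemma norm_w_scaleR_le: "norm (w y *\<^sub>R (y - x)) \<le> B * (1 + (norm (y - x))\<^sup>2)"
  using w_pos[of y] w_le[of y] le_one_plus_square[of "norm (y - x)"] by (simp add: mult_mono)

lemma integrable_w_scaleR_sub: "integrable M (\<lambda>y. w y *\<^sub>R (y - c))"
proof -
  have "integrable M (\<lambda>y. w y *\<^sub>R (y - x))"
  proof (rule Bochner_Integration.integrable_bound)
    show "integrable M (\<lambda>y. B * (1 + (norm (y - x))\<^sup>2))"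
      using integrable_sq_dist by simp
    show "AE y in M. norm (w y *\<^sub>R (y - x)) \<le> norm (B * (1 + (norm (y - x))\<^sup>2))"
      using norm_w_scaleR_le by (intro AE_I2) (simp add: order.trans[OF _ abs_ge_self])
  qed measurable
  moreover have "integrable M (\<lambda>y. w y *\<^sub>R (x - c))"
    using integrable_w by simp
  ultimately have "integrable M (\<lambda>y. w y *\<^sub>R (y - x) + w y *\<^sub>R (x - c))"
    by (rule Bochner_Integration.integrable_add)
  then show ?thesis
    by (simp add: scaleR_diff_right)
qed

lemma integral_w_scaleR_sub:
  "(\<integral>y. w y *\<^sub>R (y - c) \<partial>M) = (\<integral>y. w y *\<^sub>R y \<partial>M) - (\<integral>y. w y \<partial>M) *\<^sub>R c"
proof -
  have "integrable M (\<lambda>y. w y *\<^sub>R y)"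
    using integrable_w_scaleR_sub[of 0] by simp
  then show ?thesis
    using integrable_w by (simp add: scaleR_diff_right)
qed

lemma integral_w_scaleR_sub_weighted_mean: "(\<integral>y. w y *\<^sub>R (y - weighted_mean) \<partial>M) = 0"
  using integral_w_pos by (simp add: integral_w_scaleR_sub weighted_mean_def)

lemma norm_weighted_mean_sub_le:
  "norm (weighted_mean - x) \<le> B * (1 + (\<integral>y. (norm (y - x))\<^sup>2 \<partial>M)) / (\<integral>y. w y \<partial>M)"
proof -
  have "weighted_mean - x = (\<integral>y. w y *\<^sub>R (y - x) \<partial>M) /\<^sub>R (\<integral>y. w y \<partial>M)"
    unfolding integral_w_scaleR_sub weighted_mean_def using integral_w_pos by (simp add: scaleR_diff_right)
  then have "norm (weighted_mean - x) = norm (\<integral>y. w y *\<^sub>R (y - x) \<partial>M) / (\<integral>y. w y \<partial>M)"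
    using integral_w_pos by (simp add: divide_inverse_commute)
  also have "\<dots> \<le> (\<integral>y. B * (1 + (norm (y - x))\<^sup>2) \<partial>M) / (\<integral>y. w y \<partial>M)"
    using integrable_w_scaleR_sub integrable_sq_dist norm_w_scaleR_le integral_w_pos
    by (intro divide_right_mono Bochner_Integration.integral_norm_bound_integral) auto
  also have "(\<integral>y. B * (1 + (norm (y - x))\<^sup>2) \<partial>M) = B * (1 + (\<integral>y. (norm (y - x))\<^sup>2 \<partial>M))"
    using integrable_sq_dist by (simp add: Bochner_Integration.integral_add prob_space)
  finally show ?thesis .
qed

lemma norm_w_scaleR_sub_sq_le:
  "(norm (w y *\<^sub>R (y - c)))\<^sup>2 \<le> 2 * B\<^sup>2 * ((norm (y - x))\<^sup>2 + (norm (c - x))\<^sup>2)"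
proof -
  have "norm (y - c) \<le> norm (y - x) + norm (c - x)"
    using norm_triangle_ineq4[of "y - x" "c - x"] by simp
  then have "(norm (y - c))\<^sup>2 \<le> (norm (y - x) + norm (c - x))\<^sup>2"
    by (simp add: power_mono)
  also have "\<dots> \<le> 2 * ((norm (y - x))\<^sup>2 + (norm (c - x))\<^sup>2)"
    using zero_le_power2[of "norm (y - x) - norm (c - x)"] by (simp add: power2_eq_square algebra_simps)
  finally have "(norm (y - c))\<^sup>2 \<le> 2 * ((norm (y - x))\<^sup>2 + (norm (c - x))\<^sup>2)" .
  moreover have "(w y)\<^sup>2 \<le> B\<^sup>2"
    using w_pos[of y] w_le[of y] by (simp add: power_mono)
  ultimately have "(w y)\<^sup>2 * (norm (y - c))\<^sup>2 \<le> B\<^sup>2 * (2 * ((norm (y - x))\<^sup>2 + (norm (c - x))\<^sup>2))"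
    by (intro mult_mono) auto
  moreover have "(norm (w y *\<^sub>R (y - c)))\<^sup>2 = (w y)\<^sup>2 * (norm (y - c))\<^sup>2"
    by (simp add: power_mult_distrib)
  ultimately show ?thesis
    by (simp only: ac_simps)
qed

lemma integrable_norm_w_scaleR_sub_sq: "integrable M (\<lambda>y. (norm (w y *\<^sub>R (y - c)))\<^sup>2)"
proof (rule Bochner_Integration.integrable_bound)
  show "integrable M (\<lambda>y. 2 * B\<^sup>2 * ((norm (y - x))\<^sup>2 + (norm (c - x))\<^sup>2))"
    using integrable_sq_dist by simp
  show "AE y in M. norm ((norm (w y *\<^sub>R (y - c)))\<^sup>2)
      \<le> norm (2 * B\<^sup>2 * ((norm (y - x))\<^sup>2 + (norm (c - x))\<^sup>2))"
    using norm_w_scaleR_sub_sq_le by (intro AE_I2) (simp add: order.trans[OF _ abs_ge_self])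
qed measurable

lemma integral_norm_w_scaleR_sub_sq_le:
  "(\<integral>y. (norm (w y *\<^sub>R (y - c)))\<^sup>2 \<partial>M)
    \<le> 2 * B\<^sup>2 * ((\<integral>y. (norm (y - x))\<^sup>2 \<partial>M) + (norm (c - x))\<^sup>2)"
proof -
  have "(\<integral>y. (norm (w y *\<^sub>R (y - c)))\<^sup>2 \<partial>M)
      \<le> (\<integral>y. 2 * B\<^sup>2 * ((norm (y - x))\<^sup>2 + (norm (c - x))\<^sup>2) \<partial>M)"
    using integrable_norm_w_scaleR_sub_sq integrable_sq_dist norm_w_scaleR_sub_sq_le
    by (intro integral_mono) auto
  also have "\<dots> = 2 * B\<^sup>2 * ((\<integral>y. (norm (y - x))\<^sup>2 \<partial>M) + (norm (c - x))\<^sup>2)"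
    using integrable_sq_dist by (simp add: Bochner_Integration.integral_add prob_space)
  finally show ?thesis .
qed

lemma nn_integral_sq_error_le:
  assumes "0 < eps"
  shows "(\<integral>\<^sup>+ \<omega>. ennreal ((norm ((\<Sum>i<N. w (\<omega> i) *\<^sub>R \<omega> i) /\<^sub>R (\<Sum>i<N. w (\<omega> i)) - weighted_mean))\<^sup>2
              * indicator {\<omega>. eps \<le> 1 / real N * (\<Sum>i<N. w (\<omega> i))} \<omega>) \<partial>PiM {..<N} (\<lambda>_. M))
    \<le> ennreal ((\<integral>y. (norm (w y *\<^sub>R (y - weighted_mean)))\<^sup>2 \<partial>M) / eps\<^sup>2 / real N)"
proof -
  define h where "h y = w y *\<^sub>R (y - weighted_mean)" for y
  have [measurable]: "h \<in> borel_measurable M"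
    unfolding h_def by measurable
  have "(\<lambda>\<omega>. h (\<omega> i)) \<in> borel_measurable (PiM {..<N} (\<lambda>_. M))" if "i \<in> {..<N}" for i
    by (rule measurable_compose[OF measurable_component_singleton[OF that]]) simp
  then have [measurable]: "(\<lambda>\<omega>. \<Sum>i<N. h (\<omega> i)) \<in> borel_measurable (PiM {..<N} (\<lambda>_. M))"
    by (rule borel_measurable_sum)
  have pointwise: "ennreal ((norm ((\<Sum>i<N. w (\<omega> i) *\<^sub>R \<omega> i) /\<^sub>R (\<Sum>i<N. w (\<omega> i)) - weighted_mean))\<^sup>2
              * indicator {\<omega>. eps \<le> 1 / real N * (\<Sum>i<N. w (\<omega> i))} \<omega>)
      \<le> ennreal ((norm (\<Sum>i<N. h (\<omega> i)))\<^sup>2) * ennreal ((1 / (real N * eps))\<^sup>2)" for \<omega>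
    using norm_self_normalized_sub_le[OF \<open>0 < eps\<close>, of N w \<omega> weighted_mean]
    by (auto simp: h_def indicator_def power_divide ennreal_mult[symmetric] intro!: ennreal_leI)
  have "(\<integral>\<^sup>+ \<omega>. ennreal ((norm ((\<Sum>i<N. w (\<omega> i) *\<^sub>R \<omega> i) /\<^sub>R (\<Sum>i<N. w (\<omega> i)) - weighted_mean))\<^sup>2
              * indicator {\<omega>. eps \<le> 1 / real N * (\<Sum>i<N. w (\<omega> i))} \<omega>) \<partial>PiM {..<N} (\<lambda>_. M))
      \<le> (\<integral>\<^sup>+ \<omega>. ennreal ((norm (\<Sum>i<N. h (\<omega> i)))\<^sup>2) * ennreal ((1 / (real N * eps))\<^sup>2) \<partial>PiM {..<N} (\<lambda>_. M))"
    by (intro nn_integral_mono pointwise)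
  also have "\<dots> = ennreal (real N * (\<integral>y. (norm (h y))\<^sup>2 \<partial>M)) * ennreal ((1 / (real N * eps))\<^sup>2)"
    using nn_integral_PiM_norm_sum_sq[OF integrable_w_scaleR_sub integrable_norm_w_scaleR_sub_sq
        integral_w_scaleR_sub_weighted_mean, where N=N]
    by (simp add: nn_integral_multc h_def)
  also have "\<dots> = ennreal ((\<integral>y. (norm (h y))\<^sup>2 \<partial>M) / eps\<^sup>2 / real N)"
  proof -
    have "0 \<le> (\<integral>y. (norm (h y))\<^sup>2 \<partial>M)"
      by (intro integral_nonneg_AE) simp
    moreover have "real N * (\<integral>y. (norm (h y))\<^sup>2 \<partial>M) * (1 / (real N * eps))\<^sup>2
        = (\<integral>y. (norm (h y))\<^sup>2 \<partial>M) / eps\<^sup>2 / real N"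
      by (cases "N = 0") (simp_all add: field_simps power2_eq_square)
    ultimately show ?thesis
      by (subst ennreal_mult[symmetric]) auto
  qed
  finally show ?thesis
    unfolding h_def .
qed

lemma integral_norm_w_scaleR_sub_weighted_mean_sq_le:
  assumes "(\<integral>y. (norm (y - x))\<^sup>2 \<partial>M) \<le> V" and "0 < L" and "L \<le> (\<integral>y. w y \<partial>M)"
  shows "(\<integral>y. (norm (w y *\<^sub>R (y - weighted_mean)))\<^sup>2 \<partial>M) \<le> 2 * B\<^sup>2 * (V + (B * (1 + V) / L)\<^sup>2)"
proof -
  have "0 < B"
    using w_pos[of x] w_le[of x] by simp
  have "0 \<le> (\<integral>y. (norm (y - x))\<^sup>2 \<partial>M)"
    by (intro integral_nonneg_AE) simp
  have "norm (weighted_mean - x) \<le> B * (1 + (\<integral>y. (norm (y - x))\<^sup>2 \<partial>M)) / (\<integral>y. w y \<partial>M)"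
    by (rule norm_weighted_mean_sub_le)
  also have "\<dots> \<le> B * (1 + V) / L"
  proof (rule frac_le)
    have "0 \<le> V"
      using \<open>0 \<le> (\<integral>y. (norm (y - x))\<^sup>2 \<partial>M)\<close> assms(1) by linarith
    then show "0 \<le> B * (1 + V)"
      using \<open>0 < B\<close> by simp
    show "B * (1 + (\<integral>y. (norm (y - x))\<^sup>2 \<partial>M)) \<le> B * (1 + V)"
      using \<open>0 < B\<close> assms(1) by simp
  qed (use assms in auto)
  finally have "(norm (weighted_mean - x))\<^sup>2 \<le> (B * (1 + V) / L)\<^sup>2"
    by (simp add: power_mono)
  then show ?thesis
    using integral_norm_w_scaleR_sub_sq_le[of weighted_mean] assms(1)
    by (smt (verit) mult_left_mono zero_le_power2)
qed

end

text \<open>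
  No assumption \<open>1 \<le> N\<close> is needed: for \<open>N = 0\<close> the event \<open>Omega_ev\<close> is empty because
  \<open>1 / real 0 = 0\<close>, and both sides vanish.
\<close>

lemma zprox_hat_sq_error_le:
  fixes f :: "'a::euclidean_space \<Rightarrow> real"
  assumes "0 < lam" and "0 < delta" and f_measurable: "f \<in> borel_measurable borel"
    and f_ge: "\<And>y. m \<le> f y" and "0 < eps"
    and "0 < L" and L_le: "L \<le> (\<integral>y. exp (- f y / delta) \<partial>gauss x (lam * delta))"
  defines "B \<equiv> exp (- m / delta)" and "V \<equiv> 4 * (lam * delta) * 2 powr (real DIM('a) / 2)"
  shows "(\<integral>\<^sup>+ y. ennreal ((norm (zprox_hat delta f N y - zprox delta lam f x))\<^sup>2
              * indicator (Omega_ev delta f N eps) y) \<partial>samples delta lam x N)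
    \<le> ennreal (2 * B\<^sup>2 * (V + (B * (1 + V) / L)\<^sup>2) / eps\<^sup>2 / real N)"
proof -
  define s where "s = lam * delta"
  define w where "w y = exp (- f y / delta)" for y
  have "0 < s"
    using assms(1,2) by (simp add: s_def)
  have w_le: "w y \<le> B" for y
    using f_ge[of y] \<open>0 < delta\<close> by (simp add: w_def B_def divide_right_mono)
  have w_pos: "0 < w y" for y
    by (simp add: w_def)
  have w_measurable: "w \<in> borel_measurable borel"
    unfolding w_def[abs_def] using f_measurable by measurable
  interpret self_normalized_sampling "gauss x s" w B x
    by (intro self_normalized_sampling.intro self_normalized_sampling_axioms.intro prob_space_gauss
        gauss_second_moment(1) sets_gauss w_measurable w_pos w_le \<open>0 < s\<close>)
  have "zprox delta lam f x = weighted_mean"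
    unfolding weighted_mean_def unfolding zprox_def w_def s_def ..
  then have "(\<integral>\<^sup>+ y. ennreal ((norm (zprox_hat delta f N y - zprox delta lam f x))\<^sup>2
              * indicator (Omega_ev delta f N eps) y) \<partial>samples delta lam x N)
      \<le> ennreal ((\<integral>y. (norm (w y *\<^sub>R (y - weighted_mean)))\<^sup>2 \<partial>gauss x s) / eps\<^sup>2 / real N)"
    using nn_integral_sq_error_le[OF \<open>0 < eps\<close>, of N]
    by (simp add: zprox_hat_def Omega_ev_def samples_def w_def s_def)
  also have "\<dots> \<le> ennreal (2 * B\<^sup>2 * (V + (B * (1 + V) / L)\<^sup>2) / eps\<^sup>2 / real N)"
  proof -
    have "(\<integral>y. (norm (w y *\<^sub>R (y - weighted_mean)))\<^sup>2 \<partial>gauss x s)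
        \<le> 2 * B\<^sup>2 * (V + (B * (1 + V) / L)\<^sup>2)"
      using gauss_second_moment(2)[OF \<open>0 < s\<close>] \<open>0 < L\<close> L_le
      by (intro integral_norm_w_scaleR_sub_weighted_mean_sq_le) (simp_all add: V_def s_def w_def)
    then show ?thesis
      by (intro ennreal_leI divide_right_mono) simp_all
  qed
  finally show ?thesis .
qed

theorem lemma3:
  fixes f :: "'a::euclidean_space \<Rightarrow> real"
    and lam delta :: real and K :: "'a set" and eps :: real
  assumes "lam > 0" and "delta > 0"
    and "continuous_on UNIV f" and "\<exists>m. \<forall>y. m \<le> f y"
    and "compact K" and "eps > 0"
  shows "\<exists>C>0. \<forall>x\<in>K. \<forall>N::nat. N \<ge> 1 \<longrightarrow>
           (\<integral>\<^sup>+ y. ennreal ((norm (zprox_hat delta f N y - zprox delta lam f x))\<^sup>2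
                    * indicator (Omega_ev delta f N eps) y) \<partial>samples delta lam x N)
           \<le> ennreal (C / real N)"
proof -
  obtain m where f_ge: "\<And>y. m \<le> f y"
    using assms(4) by blast
  define B where "B = exp (- m / delta)"
  define V where "V = 4 * (lam * delta) * 2 powr (real DIM('a) / 2)"
  have "continuous_on UNIV (\<lambda>y. exp (- f y / delta))"
    using assms(2,3) by (intro continuous_intros) auto
  moreover have "exp (- f y / delta) \<le> B" for y
    using f_ge[of y] assms(2) by (simp add: B_def divide_right_mono)
  ultimately have "\<exists>L>0. \<forall>x\<in>K. L \<le> (\<integral>y. exp (- f y / delta) \<partial>gauss x (lam * delta))"
    using assms(1,2,5) by (intro gauss_integral_uniformly_positive) auto
  then obtain L where "0 < L"
    and L: "\<And>x. x \<in> K \<Longrightarrow> L \<le> (\<integral>y. exp (- f y / delta) \<partial>gauss x (lam * delta))"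
    by blast
  define C where "C = 2 * B\<^sup>2 * (V + (B * (1 + V) / L)\<^sup>2) / eps\<^sup>2"
  have "0 < V"
    using assms(1,2) by (simp add: V_def)
  then have "0 < V + (B * (1 + V) / L)\<^sup>2"
    by (intro add_pos_nonneg) auto
  then have "0 < C"
    using assms(6) by (simp add: C_def B_def)
  moreover have "(\<integral>\<^sup>+ y. ennreal ((norm (zprox_hat delta f N y - zprox delta lam f x))\<^sup>2
                    * indicator (Omega_ev delta f N eps) y) \<partial>samples delta lam x N)
           \<le> ennreal (C / real N)" if "x \<in> K" for x N
    unfolding C_def B_def V_def
    by (rule zprox_hat_sq_error_le[OF assms(1,2) borel_measurable_continuous_onI[OF assms(3)] f_ge
          assms(6) \<open>0 < L\<close> L[OF that]])
  ultimately show ?thesis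
    by blast
qed

end
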